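(* Let $Q_{\mathcal A}=\{(\alpha,U_\alpha):\alpha\in\mathcal{A}(M)\text{ extendible}\}$, where $U_\alpha$ is the largest open set with $(\alpha,U_\alpha)\in\mathrm{EX}(M)$. Then the topological boundary $\partial\iota_{Q_{\mathcal A}}(M)$ of $\iota_{Q_{\mathcal A}}(M)$ in $Q_{\mathcal A}(M)$ is in bijective correspondence with the quotient $\mathcal{B}(M)/\!\equiv$, where $\mathcal{B}(M)=\{(\alpha,U,\{p\}):(\alpha,U)\in\mathrm{EX}(M),\ p\in B(\alpha)\cap U\}$ is the set of all boundary points.
   Context: Conventions: $M$ is an $n$-dimensional smooth manifold (Hausdorff, second countable) with maximal $C^\infty$ atlas $\mathcal{A}(M)$; every chart $\alpha$ has open domain $\mathrm{dom}(\alpha)\subset M$ and open range $\mathrm{ran}(\alpha)\subset\mathbb{R}^n$. For $A\subset\mathbb{R}^n$, $\partial A$ is its boundary in $\mathbb{R}^n$; for $A\subset U\subset\mathbb{R}^n$, $\partial_U A$ is the boundary of $A$ relative to $U$. An admissible boundary point of $\alpha$ is a $p\in\partial\,\mathrm{ran}(\alpha)$ such that every sequence $(x_i)\subset\mathrm{dom}(\alpha)$ with $\alpha(x_i)\to p$ has no accumulation point in $M$; $B(\alpha)$ is the set of these. An extension is a pair $(\alpha,U)$, $U\subset\mathbb{R}^n$ open, $\mathrm{ran}(\alpha)\subset U$, $\emptyset\ne\partial_U\mathrm{ran}(\alpha)\subset B(\alpha)$; $\mathrm{EX}(M)$ is the set of extensions; $\alpha$ is extendible if it has an extension, and then there is a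 unique largest such $U$. A boundary set is $(\alpha,U,V)$ with $(\alpha,U)\in\mathrm{EX}(M)$, $V\subset B(\alpha)\cap U$ (a boundary point if $V=\{p\}$). $(\alpha,U,V)$ covers $(\beta,X,Y)$ if for every sequence $(y_i)\subset\mathrm{dom}(\beta)$ with $(\beta(y_i))$ having an accumulation point in $Y$ there is a subsequence $(v_i)\subset\mathrm{dom}(\alpha)$ of $(y_i)$ with $(\alpha(v_i))$ having an accumulation point in $V$; they are equivalent, $\equiv$, if each covers the other. Completion: for $Q\subset\mathrm{EX}(M)$ let $P=\{(\alpha,\mathrm{ran}(\alpha)):\alpha\in\mathcal{A}(M)\}$, $S_Q=P\cup Q$, $N_{(\alpha,U)}=\mathrm{ran}(\alpha)\cup\partial_U\mathrm{ran}(\alpha)$ with subspace topology of $\mathbb{R}^n$, $N_Q=\bigsqcup_{(\alpha,U)\in S_Q}N_{(\alpha,U)}$ with disjoint-union topology. Identify $x\in N_{(\alpha,U)}$ with $y\in N_{(\beta,X)}$ iff either $x\in\mathrm{ran}(\alpha)$, $y\in\mathrm{ran}(\beta)$, $\beta\circ\alpha^{-1}(x)=y$, or $x\in\partial_U\mathrm{ran}(\alpha)$, $y\in\partial_X\mathrm{ran}(\beta)$, $(\alpha,U,\{x\})\equiv(\beta,X,\{y\})$. $Q(M)$ is the quotient space, $q:N_Q\to Q(M)$ the quotient map, and $\iota_Q:M\to Q(M)$, $\iota_Q(x)=q(\alpha(x))$ for any $\alpha\in\mathcal{A}(M)$ with $x\in\mathrm{dom}(\alpha)$. *)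

theory Defs
  imports "HOL-Analysis.Analysis"
begin

coinductive smooth_real_on :: "(real^'n) set \<Rightarrow> (real^'n \<Rightarrow> real) \<Rightarrow> bool" for U where
  "continuous_on U g \<Longrightarrow>
   (\<forall>i. \<exists>d. (\<forall>x\<in>U. ((\<lambda>t. g (x + t *\<^sub>R axis i 1)) has_real_derivative d x) (at 0))
             \<and> smooth_real_on U d)
   \<Longrightarrow> smooth_real_on U g"

definition smooth_on :: "(real^'n) set \<Rightarrow> (real^'n \<Rightarrow> real^'m) \<Rightarrow> bool" where
  "smooth_on U f \<longleftrightarrow> (\<forall>j. smooth_real_on U (\<lambda>x. f x $ j))"

type_synonym ('a,'n) chart = "'a set \<times> ('a \<Rightarrow> real^'n)"

definition cdom :: "('a,'n) chart \<Rightarrow> 'a set" where "cdom \<alpha> = fst \<alpha>"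
definition cmap :: "('a,'n) chart \<Rightarrow> 'a \<Rightarrow> real^'n" where "cmap \<alpha> = snd \<alpha>"
definition cran :: "('a,'n) chart \<Rightarrow> (real^'n) set" where "cran \<alpha> = cmap \<alpha> ` cdom \<alpha>"
definition cinv :: "('a,'n) chart \<Rightarrow> real^'n \<Rightarrow> 'a" where "cinv \<alpha> = inv_into (cdom \<alpha>) (cmap \<alpha>)"

definition is_chart :: "('a::topological_space,'n::finite) chart \<Rightarrow> bool" where
  "is_chart \<alpha> \<longleftrightarrow> open (cdom \<alpha>) \<and> open (cran \<alpha>) \<and>
     homeomorphism (cdom \<alpha>) (cran \<alpha>) (cmap \<alpha>) (cinv \<alpha>)"

definition smooth_compatible :: "('a,'n::finite) chart \<Rightarrow> ('a,'n) chart \<Rightarrow> bool" where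
  "smooth_compatible \<alpha> \<beta> \<longleftrightarrow>
     smooth_on (cmap \<alpha> ` (cdom \<alpha> \<inter> cdom \<beta>)) (cmap \<beta> \<circ> cinv \<alpha>) \<and>
     smooth_on (cmap \<beta> ` (cdom \<alpha> \<inter> cdom \<beta>)) (cmap \<alpha> \<circ> cinv \<beta>)"

definition maximal_smooth_atlas :: "('a::topological_space,'n::finite) chart set \<Rightarrow> bool" where
  "maximal_smooth_atlas A \<longleftrightarrow>
     (\<forall>\<alpha>\<in>A. is_chart \<alpha>) \<and> (\<Union>\<alpha>\<in>A. cdom \<alpha>) = UNIV \<and>
     (\<forall>\<alpha>\<in>A. \<forall>\<beta>\<in>A. smooth_compatible \<alpha> \<beta>) \<and>
     (\<forall>\<beta>. is_chart \<beta> \<and> (\<forall>\<alpha>\<in>A. smooth_compatible \<alpha> \<beta>) \<longrightarrow> \<beta> \<in> A)"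

definition seq_accum :: "(nat \<Rightarrow> 'b::topological_space) \<Rightarrow> 'b \<Rightarrow> bool" where
  "seq_accum x y \<longleftrightarrow> (\<forall>S. open S \<and> y \<in> S \<longrightarrow> (\<exists>\<^sub>F i in sequentially. x i \<in> S))"

definition has_accum :: "(nat \<Rightarrow> 'b::topological_space) \<Rightarrow> bool" where
  "has_accum x \<longleftrightarrow> (\<exists>y. seq_accum x y)"

definition rel_bd :: "(real^'n) set \<Rightarrow> (real^'n) set \<Rightarrow> (real^'n) set" where
  "rel_bd U A = (subtopology euclidean U) frontier_of A"

definition Bpts :: "('a::topological_space,'n::finite) chart \<Rightarrow> (real^'n) set" where
  "Bpts \<alpha> = {p. p \<in> frontier (cran \<alpha>) \<and>
      (\<forall>x. (\<forall>i. x i \<in> cdom \<alpha>) \<and> (cmap \<alpha> \<circ> x) \<longlonglongrightarrow> p \<longrightarrow> \<not> has_accum x)}"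

definition EXT :: "('a::topological_space,'n::finite) chart set
                   \<Rightarrow> (('a,'n) chart \<times> (real^'n) set) set" where
  "EXT A = {(\<alpha>, U). \<alpha> \<in> A \<and> open U \<and> cran \<alpha> \<subseteq> U \<and>
              rel_bd U (cran \<alpha>) \<noteq> {} \<and> rel_bd U (cran \<alpha>) \<subseteq> Bpts \<alpha>}"

definition extendible :: "('a::topological_space,'n::finite) chart set \<Rightarrow> ('a,'n) chart \<Rightarrow> bool" where
  "extendible A \<alpha> \<longleftrightarrow> (\<exists>U. (\<alpha>, U) \<in> EXT A)"

definition Umax :: "('a::topological_space,'n::finite) chart set \<Rightarrow> ('a,'n) chart \<Rightarrow> (real^'n) set" where
  "Umax A \<alpha> = (THE U. (\<alpha>, U) \<in> EXT A \<and> (\<forall>V. (\<alpha>, V) \<in> EXT A \<longrightarrow> V \<subseteq> U))"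

type_synonym ('a,'n) bset = "('a,'n) chart \<times> ((real^'n) set) \<times> ((real^'n) set)"

definition is_bset :: "('a::topological_space,'n::finite) chart set \<Rightarrow> ('a,'n) bset \<Rightarrow> bool" where
  "is_bset A b \<longleftrightarrow> (case b of (\<alpha>, U, V) \<Rightarrow> (\<alpha>, U) \<in> EXT A \<and> V \<subseteq> Bpts \<alpha> \<inter> U)"

definition covers :: "('a,'n::finite) bset \<Rightarrow> ('a,'n) bset \<Rightarrow> bool" where
  "covers b c \<longleftrightarrow> (case b of (\<alpha>, U, V) \<Rightarrow> case c of (\<beta>, X, Y) \<Rightarrow>
     (\<forall>y. (\<forall>i. y i \<in> cdom \<beta>) \<and> (\<exists>q\<in>Y. seq_accum (cmap \<beta> \<circ> y) q) \<longrightarrow>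
        (\<exists>r. strict_mono r \<and> (\<forall>i. y (r i) \<in> cdom \<alpha>) \<and>
             (\<exists>p\<in>V. seq_accum (cmap \<alpha> \<circ> (y \<circ> r)) p))))"

definition bequiv :: "('a,'n::finite) bset \<Rightarrow> ('a,'n) bset \<Rightarrow> bool" where
  "bequiv b c \<longleftrightarrow> covers b c \<and> covers c b"

definition BM :: "('a::topological_space,'n::finite) chart set \<Rightarrow> ('a,'n) bset set" where
  "BM A = {(\<alpha>, U, {p}) | \<alpha> U p. (\<alpha>, U) \<in> EXT A \<and> p \<in> Bpts \<alpha> \<inter> U}"

definition BM_rel :: "('a::topological_space,'n::finite) chart set \<Rightarrow> (('a,'n) bset \<times> ('a,'n) bset) set" where
  "BM_rel A = {(b, c). b \<in> BM A \<and> c \<in> BM A \<and> bequiv b c}"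

type_synonym ('a,'n) idx = "('a,'n) chart \<times> (real^'n) set"
type_synonym ('a,'n) npt = "('a,'n) idx \<times> (real^'n)"

definition SQ :: "('a::topological_space,'n::finite) chart set \<Rightarrow> ('a,'n) idx set \<Rightarrow> ('a,'n) idx set" where
  "SQ A Q = {(\<alpha>, cran \<alpha>) | \<alpha>. \<alpha> \<in> A} \<union> Q"

definition Nset :: "('a,'n::finite) idx \<Rightarrow> (real^'n) set" where
  "Nset s = (case s of (\<alpha>, U) \<Rightarrow> cran \<alpha> \<union> rel_bd U (cran \<alpha>))"

definition NQ_top :: "('a::topological_space,'n::finite) chart set \<Rightarrow> ('a,'n) idx set \<Rightarrow> ('a,'n) npt topology" where
  "NQ_top A Q = sum_topology (\<lambda>s. subtopology euclidean (Nset s)) (SQ A Q)"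

definition ident :: "('a::topological_space,'n::finite) chart set \<Rightarrow> ('a,'n) idx set \<Rightarrow> (('a,'n) npt \<times> ('a,'n) npt) set" where
  "ident A Q = {(((\<alpha>, U), x), ((\<beta>, X), y)) | \<alpha> U x \<beta> X y.
      (\<alpha>, U) \<in> SQ A Q \<and> (\<beta>, X) \<in> SQ A Q \<and> x \<in> Nset (\<alpha>, U) \<and> y \<in> Nset (\<beta>, X) \<and>
      ((x \<in> cran \<alpha> \<and> y \<in> cran \<beta> \<and> cinv \<alpha> x \<in> cdom \<beta> \<and> cmap \<beta> (cinv \<alpha> x) = y) \<or>
       (x \<in> rel_bd U (cran \<alpha>) \<and> y \<in> rel_bd X (cran \<beta>) \<and>
        bequiv (\<alpha>, U, {x}) (\<beta>, X, {y})))}"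

definition ident_eq :: "('a::topological_space,'n::finite) chart set \<Rightarrow> ('a,'n) idx set \<Rightarrow> (('a,'n) npt \<times> ('a,'n) npt) set" where
  "ident_eq A Q = Restr ((ident A Q \<union> (ident A Q)\<inverse>)\<^sup>*) (topspace (NQ_top A Q))"

definition qmap :: "('a::topological_space,'n::finite) chart set \<Rightarrow> ('a,'n) idx set \<Rightarrow> ('a,'n) npt \<Rightarrow> ('a,'n) npt set" where
  "qmap A Q z = ident_eq A Q `` {z}"

definition QM_top :: "('a::topological_space,'n::finite) chart set \<Rightarrow> ('a,'n) idx set \<Rightarrow> ('a,'n) npt set topology" where
  "QM_top A Q = topology (\<lambda>T. T \<subseteq> topspace (NQ_top A Q) // ident_eq A Q \<and>
                               openin (NQ_top A Q) (\<Union>T))"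

definition iotaQ :: "('a::topological_space,'n::finite) chart set \<Rightarrow> ('a,'n) idx set \<Rightarrow> 'a \<Rightarrow> ('a,'n) npt set" where
  "iotaQ A Q x = (let \<alpha> = (SOME \<alpha>. \<alpha> \<in> A \<and> x \<in> cdom \<alpha>) in qmap A Q ((\<alpha>, cran \<alpha>), cmap \<alpha> x))"

definition QA :: "('a::topological_space,'n::finite) chart set \<Rightarrow> ('a,'n) idx set" where
  "QA A = {(\<alpha>, Umax A \<alpha>) | \<alpha>. \<alpha> \<in> A \<and> extendible A \<alpha>}"

end

theory Submission
  imports Defs
begin

text \<open>The points of \<open>N_Q\<close> are either interior points, lying in a chart range, or
  boundary points, lying in some \<open>\<partial>_U ran(\<alpha>)\<close>. Since chart ranges are open, no boundary
  point lies in a range, so the identification never relates an interior point to a boundary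
  point, and on boundary points it is generated by, hence coincides with, the equivalence
  \<open>\<equiv>\<close>. The interior points form an open, saturated and dense subset of \<open>N_Q\<close> whose
  image in \<open>Q(M)\<close> is \<open>\<iota>(M)\<close>; so \<open>\<partial>\<iota>(M)\<close> is exactly the set of classes of boundary
  points. Finally every boundary point \<open>(\<alpha>,U,{p})\<close> is equivalent to \<open>(\<alpha>,U\<^sub>\<alpha>,{p})\<close>, which
  is represented in \<open>N_{Q_A}\<close>, so these classes are in bijection with \<open>\<B>(M)/\<equiv>\<close>.\<close>

definition quotient_topology :: "'a topology \<Rightarrow> ('a \<times> 'a) set \<Rightarrow> 'a set topology" where
  "quotient_topology X E = topology (\<lambda>T. T \<subseteq> topspace X // E \<and> openin X (\<Union>T))"

lemma openin_quotient_topology: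
  assumes E: "equiv (topspace X) E"
  shows "openin (quotient_topology X E) T \<longleftrightarrow> T \<subseteq> topspace X // E \<and> openin X (\<Union>T)"
proof -
  have "istopology (\<lambda>T. T \<subseteq> topspace X // E \<and> openin X (\<Union>T))"
    unfolding istopology_def
  proof (rule conjI; intro allI impI)
    fix S T assume S: "S \<subseteq> topspace X // E \<and> openin X (\<Union>S)"
      and T: "T \<subseteq> topspace X // E \<and> openin X (\<Union>T)"
    have "\<Union>(S \<inter> T) = \<Union>S \<inter> \<Union>T"
      using quotient_disj[OF E] S T by blast
    moreover have "openin X (\<Union>S \<inter> \<Union>T)"
      using S T by (intro openin_Int) blast+
    ultimately show "S \<inter> T \<subseteq> topspace X // E \<and> openin X (\<Union>(S \<inter> T))"
      using S by (metis inf.coboundedI1)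
  next
    fix K assume "\<forall>T\<in>K. T \<subseteq> topspace X // E \<and> openin X (\<Union>T)"
    moreover have "\<Union>(\<Union>K) = \<Union>(Union ` K)" by blast
    ultimately show "\<Union>K \<subseteq> topspace X // E \<and> openin X (\<Union>(\<Union>K))"
      by (auto intro: openin_Union)
  qed
  then show ?thesis
    by (simp add: quotient_topology_def)
qed

lemma topspace_quotient_topology:
  assumes E: "equiv (topspace X) E"
  shows "topspace (quotient_topology X E) = topspace X // E"
proof -
  have "openin (quotient_topology X E) (topspace X // E)"
    by (simp add: openin_quotient_topology[OF E] Union_quotient[OF E])
  then show ?thesis
    using openin_subset openin_topspace openin_quotient_topology[OF E] by blast
qed

lemma frontier_of_quotient_dense_open:
  assumes E: "equiv (topspace X) E"
    and U: "openin X U" "E `` U \<subseteq> U" "X closure_of U = topspace X"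
  shows "quotient_topology X E frontier_of ((\<lambda>z. E `` {z}) ` U) =
           (\<lambda>z. E `` {z}) ` (topspace X - U)"
proof -
  let ?Y = "quotient_topology X E" and ?q = "\<lambda>z. E `` {z}"
  have UX: "U \<subseteq> topspace X" using U(1) by (rule openin_subset)
  have "\<Union>(?q ` U) = U"
    using U(2) UX equiv_class_self[OF E] by blast
  then have op: "openin ?Y (?q ` U)"
    using UX U(1) by (auto simp: openin_quotient_topology[OF E] quotientI)
  have dense: "?Y closure_of (?q ` U) = topspace ?Y"
  proof (rule antisym[OF closure_of_subset_topspace], rule subsetI)
    fix C assume "C \<in> topspace ?Y"
    then obtain z where z: "z \<in> topspace X" "C = ?q z"
      by (auto simp: topspace_quotient_topology[OF E] elim: quotientE)
    show "C \<in> ?Y closure_of (?q ` U)"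
      unfolding in_closure_of
    proof (intro conjI allI impI)
      show "C \<in> topspace ?Y"
        using z by (simp add: topspace_quotient_topology[OF E] quotientI)
    next
      fix W assume W: "C \<in> W \<and> openin ?Y W"
      moreover have "z \<in> C" using z equiv_class_self[OF E] by simp
      ultimately have "z \<in> \<Union>W" "openin X (\<Union>W)" "W \<subseteq> topspace X // E"
        by (auto simp: openin_quotient_topology[OF E])
      moreover have "z \<in> X closure_of U" using U(3) z(1) by simp
      ultimately obtain y D where y: "y \<in> U" "y \<in> D" "D \<in> W" "D \<in> topspace X // E"
        unfolding in_closure_of by blast
      then obtain w where "D = ?q w" by (auto elim: quotientE)
      then have "D = ?q y"
        using y(2) equiv_class_eq[OF E] by blast
      then show "\<exists>D. D \<in> ?q ` U \<and> D \<in> W" using y by blast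
    qed
  qed
  have "?Y frontier_of (?q ` U) = topspace X // E - ?q ` U"
    using op dense by (simp add: frontier_of_def interior_of_openin topspace_quotient_topology[OF E])
  also have "\<dots> = ?q ` (topspace X - U)"
  proof
    show "topspace X // E - ?q ` U \<subseteq> ?q ` (topspace X - U)"
      by (auto elim!: quotientE)
    show "?q ` (topspace X - U) \<subseteq> topspace X // E - ?q ` U"
      using U(2) equiv_class_self[OF E] by (auto intro: quotientI)
  qed
  finally show ?thesis .
qed

lemma closure_of_Sigma_sum_topology:
  "sum_topology X I closure_of (Sigma I T) = Sigma I (\<lambda>i. X i closure_of T i)"
proof
  have closed: "closedin (sum_topology X I) (Sigma I (\<lambda>i. X i closure_of T i))"
    by (simp add: closedin_disjoint_union)
  have sub: "topspace (sum_topology X I) \<inter> Sigma I T \<subseteq> Sigma I (\<lambda>i. X i closure_of T i)"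
  proof
    fix z assume "z \<in> topspace (sum_topology X I) \<inter> Sigma I T"
    then obtain i x where "z = (i, x)" "i \<in> I" "x \<in> topspace (X i) \<inter> T i" by auto
    then show "z \<in> Sigma I (\<lambda>i. X i closure_of T i)"
      using closure_of_subset_Int[of "X i" "T i"] by blast
  qed
  show "sum_topology X I closure_of (Sigma I T) \<subseteq> Sigma I (\<lambda>i. X i closure_of T i)"
    unfolding closure_of_restrict[of _ "Sigma I T"] using sub closed by (rule closure_of_minimal)
next
  show "Sigma I (\<lambda>i. X i closure_of T i) \<subseteq> sum_topology X I closure_of (Sigma I T)"
  proof clarify
    fix i x assume i: "i \<in> I" and x: "x \<in> X i closure_of T i"
    show "(i, x) \<in> sum_topology X I closure_of (Sigma I T)"
      unfolding in_closure_of
    proof (intro conjI allI impI)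
      have "x \<in> topspace (X i)"
        using x closure_of_subset_topspace by fastforce
      then show "(i, x) \<in> topspace (sum_topology X I)"
        using i by simp
    next
      fix W assume W: "(i, x) \<in> W \<and> openin (sum_topology X I) W"
      then have "openin (X i) {y. (i, y) \<in> W}" "x \<in> {y. (i, y) \<in> W}"
        using i by (auto simp: openin_sum_topology)
      then obtain y where "y \<in> T i" "(i, y) \<in> W"
        using x unfolding in_closure_of by (metis mem_Collect_eq)
      then show "\<exists>z. z \<in> Sigma I T \<and> z \<in> W" using i by blast
    qed
  qed
qed

lemma bij_betw_classes_quotient:
  assumes E: "equiv T E" and R: "equiv B R" and P: "P \<subseteq> T" "h ` P \<subseteq> B"
    and compat: "\<And>z w. z \<in> P \<Longrightarrow> w \<in> P \<Longrightarrow> (z, w) \<in> E \<longleftrightarrow> (h z, h w) \<in> R"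
    and onto: "\<And>b. b \<in> B \<Longrightarrow> \<exists>z\<in>P. (h z, b) \<in> R"
  shows "bij_betw (\<lambda>C. R `` h ` (C \<inter> P)) ((\<lambda>z. E `` {z}) ` P) (B // R)"
proof -
  have image_class: "R `` h ` (E `` {z} \<inter> P) = R `` {h z}" if z: "z \<in> P" for z
  proof
    have "z \<in> E `` {z} \<inter> P" using z P(1) equiv_class_self[OF E] by blast
    then show "R `` {h z} \<subseteq> R `` h ` (E `` {z} \<inter> P)" by blast
    show "R `` h ` (E `` {z} \<inter> P) \<subseteq> R `` {h z}"
    proof
      fix c assume "c \<in> R `` h ` (E `` {z} \<inter> P)"
      then obtain w where w: "w \<in> P" "(z, w) \<in> E" "c \<in> R `` {h w}" by blast
      then have "(h z, h w) \<in> R" using z compat by blast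
      then have "R `` {h z} = R `` {h w}" by (rule equiv_class_eq[OF R])
      then show "c \<in> R `` {h z}" using w(3) by simp
    qed
  qed
  show ?thesis
  proof (rule bij_betw_imageI)
    show "inj_on (\<lambda>C. R `` h ` (C \<inter> P)) ((\<lambda>z. E `` {z}) ` P)"
    proof (rule inj_onI, clarify)
      fix z w assume z: "z \<in> P" and w: "w \<in> P"
        and eq: "R `` h ` (E `` {z} \<inter> P) = R `` h ` (E `` {w} \<inter> P)"
      have "R `` {h z} = R `` {h w}" using eq image_class[OF z] image_class[OF w] by simp
      then have "(h z, h w) \<in> R"
        using eq_equiv_class_iff[OF R] z w P(2) by blast
      then have "(z, w) \<in> E" using compat[OF z w] by simp
      then show "E `` {z} = E `` {w}" by (rule equiv_class_eq[OF E])
    qed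
    have "(\<lambda>C. R `` h ` (C \<inter> P)) ` (\<lambda>z. E `` {z}) ` P = (\<lambda>z. R `` {h z}) ` P"
      using image_class by (simp add: image_image)
    also have "\<dots> = B // R"
    proof
      show "(\<lambda>z. R `` {h z}) ` P \<subseteq> B // R"
        using P(2) by (auto intro: quotientI)
      show "B // R \<subseteq> (\<lambda>z. R `` {h z}) ` P"
      proof
        fix K assume "K \<in> B // R"
        then obtain b where b: "b \<in> B" "K = R `` {b}" by (rule quotientE)
        then obtain z where z: "z \<in> P" "(h z, b) \<in> R" using onto by blast
        then have "K = R `` {h z}" using b(2) equiv_class_eq[OF R z(2)] by simp
        then show "K \<in> (\<lambda>z. R `` {h z}) ` P" using z(1) by blast
      qed
    qed
    finally show "(\<lambda>C. R `` h ` (C \<inter> P)) ` (\<lambda>z. E `` {z}) ` P = B // R" .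
  qed
qed

lemma open_cran:
  assumes "maximal_smooth_atlas A" "\<alpha> \<in> A"
  shows "open (cran \<alpha>)"
  using assms by (auto simp: maximal_smooth_atlas_def is_chart_def)

lemma rel_bd_open: "open U \<Longrightarrow> rel_bd U S = U \<inter> frontier S"
  unfolding rel_bd_def by (simp add: frontier_of_subtopology_open)

lemma rel_bd_subset_closure: "rel_bd U S \<subseteq> U \<inter> closure S"
proof -
  have "rel_bd U S \<subseteq> top_of_set U closure_of S"
    unfolding rel_bd_def frontier_of_def by blast
  also have "\<dots> \<subseteq> U \<inter> closure S"
    using closure_of_subtopology_subset[of euclidean U S]
      closure_of_subset_subtopology[of euclidean U S] by simp
  finally show ?thesis .
qed

lemma rel_bd_disjoint_open:
  assumes "open S"
  shows "rel_bd U S \<inter> S = {}"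
proof -
  have "U \<inter> S \<subseteq> top_of_set U interior_of S"
    using assms by (intro interior_of_maximal) auto
  then show ?thesis
    using frontier_of_subset_topspace[of "top_of_set U" S]
    unfolding rel_bd_def frontier_of_def by auto
qed

lemma rel_bd_self: "rel_bd S S = {}"
  unfolding rel_bd_def by (metis frontier_of_topspace topspace_euclidean_subtopology)

lemma Umax_greatest:
  assumes "extendible A \<alpha>"
  shows "(\<alpha>, Umax A \<alpha>) \<in> EXT A" and "(\<alpha>, V) \<in> EXT A \<Longrightarrow> V \<subseteq> Umax A \<alpha>"
proof -
  define W where "W = \<Union>{V. (\<alpha>, V) \<in> EXT A}"
  obtain U0 where U0: "(\<alpha>, U0) \<in> EXT A"
    using assms unfolding extendible_def by blast
  have "open W" unfolding W_def by (auto simp: EXT_def)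
  have "rel_bd W (cran \<alpha>) \<subseteq> Bpts \<alpha>"
  proof
    fix x assume "x \<in> rel_bd W (cran \<alpha>)"
    then obtain V where V: "(\<alpha>, V) \<in> EXT A" "x \<in> V" "x \<in> frontier (cran \<alpha>)"
      using rel_bd_open[OF \<open>open W\<close>] unfolding W_def by blast
    then have "x \<in> rel_bd V (cran \<alpha>)" by (auto simp: EXT_def rel_bd_open)
    then show "x \<in> Bpts \<alpha>" using V(1) by (auto simp: EXT_def)
  qed
  moreover have "rel_bd U0 (cran \<alpha>) \<subseteq> rel_bd W (cran \<alpha>)" "cran \<alpha> \<subseteq> W"
    using U0 \<open>open W\<close> unfolding W_def by (auto simp: EXT_def rel_bd_open)
  ultimately have W: "(\<alpha>, W) \<in> EXT A"
    using U0 \<open>open W\<close> by (auto simp: EXT_def)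
  have greatest: "\<forall>V. (\<alpha>, V) \<in> EXT A \<longrightarrow> V \<subseteq> W" unfolding W_def by blast
  have "Umax A \<alpha> = W" unfolding Umax_def
    by (rule the_equality) (use W greatest in auto)
  then show "(\<alpha>, Umax A \<alpha>) \<in> EXT A" "(\<alpha>, V) \<in> EXT A \<Longrightarrow> V \<subseteq> Umax A \<alpha>"
    using W greatest by auto
qed

lemma QA_subset_EXT: "QA A \<subseteq> EXT A"
  unfolding QA_def using Umax_greatest(1) by blast

lemma covers_refl: "covers (\<alpha>, U, V) (\<alpha>, X, V)"
  unfolding covers_def by (auto intro!: exI[of _ id] simp: strict_mono_def)

lemma covers_trans:
  assumes "covers b c" "covers c d"
  shows "covers b d"
proof -
  obtain \<alpha> U V \<beta> X Y \<gamma> Z W where bcd: "b = (\<alpha>, U, V)" "c = (\<beta>, X, Y)" "d = (\<gamma>, Z, W)"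
    by (metis prod.collapse)
  show ?thesis
    unfolding bcd covers_def split
  proof clarify
    fix y q assume y: "\<forall>i. y i \<in> cdom \<gamma>" "q \<in> W" "seq_accum (cmap \<gamma> \<circ> y) q"
    obtain r1 where r1: "strict_mono r1" "\<forall>i. y (r1 i) \<in> cdom \<beta>"
        "\<exists>p\<in>Y. seq_accum (cmap \<beta> \<circ> (y \<circ> r1)) p"
      using assms(2) y unfolding bcd covers_def by (auto dest!: spec[of _ y])
    obtain r2 where r2: "strict_mono r2" "\<forall>i. y (r1 (r2 i)) \<in> cdom \<alpha>"
        "\<exists>p\<in>V. seq_accum (cmap \<alpha> \<circ> (y \<circ> (r1 \<circ> r2))) p"
      using assms(1) r1 unfolding bcd covers_def
      by (auto dest!: spec[of _ "y \<circ> r1"] simp: comp_assoc) blast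
    show "\<exists>r. strict_mono r \<and> (\<forall>i. y (r i) \<in> cdom \<alpha>) \<and>
              (\<exists>p\<in>V. seq_accum (cmap \<alpha> \<circ> (y \<circ> r)) p)"
      using r1 r2 by (intro exI[of _ "r1 \<circ> r2"]) (auto simp: strict_mono_def comp_assoc)
  qed
qed

lemma bequiv_refl: "bequiv b b"
  by (cases b) (auto simp: bequiv_def covers_refl)

lemma bequiv_sym: "bequiv b c \<Longrightarrow> bequiv c b"
  unfolding bequiv_def by blast

lemma bequiv_trans: "bequiv b c \<Longrightarrow> bequiv c d \<Longrightarrow> bequiv b d"
  unfolding bequiv_def using covers_trans by blast

lemma equiv_BM_rel: "equiv (BM A) (BM_rel A)"
  unfolding equiv_def refl_on_def sym_def trans_def BM_rel_def
  using bequiv_refl bequiv_sym bequiv_trans by blast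

definition NQ_interior ::
    "('a::topological_space,'n::finite) chart set \<Rightarrow> ('a,'n) idx set \<Rightarrow> ('a,'n) npt set"
  where "NQ_interior A Q = (SIGMA s:SQ A Q. cran (fst s))"

definition NQ_boundary ::
    "('a::topological_space,'n::finite) chart set \<Rightarrow> ('a,'n) idx set \<Rightarrow> ('a,'n) npt set"
  where "NQ_boundary A Q = (SIGMA s:SQ A Q. rel_bd (snd s) (cran (fst s)))"

definition bset_of :: "('a,'n) npt \<Rightarrow> ('a,'n) bset"
  where "bset_of z = (fst (fst z), snd (fst z), {snd z})"

lemma topspace_NQ_top: "topspace (NQ_top A Q) = NQ_interior A Q \<union> NQ_boundary A Q"
  by (auto simp: NQ_top_def NQ_interior_def NQ_boundary_def Nset_def split: prod.splits)

lemma NQ_interior_Int_NQ_boundary: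
  assumes "maximal_smooth_atlas A" "Q \<subseteq> EXT A"
  shows "NQ_interior A Q \<inter> NQ_boundary A Q = {}"
proof -
  have "open (cran (fst s))" if "s \<in> SQ A Q" for s
  proof -
    have "fst s \<in> A" using that assms(2) by (auto simp: SQ_def EXT_def)
    with assms(1) show ?thesis by (rule open_cran)
  qed
  then show ?thesis
    using rel_bd_disjoint_open unfolding NQ_interior_def NQ_boundary_def by blast
qed

lemma NQ_boundary_EXT:
  assumes "Q \<subseteq> EXT A" "((\<alpha>, U), p) \<in> NQ_boundary A Q"
  shows "(\<alpha>, U) \<in> EXT A" and "p \<in> Bpts \<alpha> \<inter> U"
proof -
  have p: "p \<in> rel_bd U (cran \<alpha>)" and "(\<alpha>, U) \<in> SQ A Q"
    using assms(2) by (auto simp: NQ_boundary_def)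
  then show E: "(\<alpha>, U) \<in> EXT A"
    using assms(1) by (auto simp: SQ_def rel_bd_self)
  show "p \<in> Bpts \<alpha> \<inter> U"
    using E p rel_bd_subset_closure by (fastforce simp: EXT_def)
qed

lemma bset_of_in_BM:
  assumes "Q \<subseteq> EXT A" "z \<in> NQ_boundary A Q"
  shows "bset_of z \<in> BM A"
proof -
  obtain \<alpha> U p where z: "z = ((\<alpha>, U), p)" by (metis prod.collapse)
  have "(\<alpha>, U) \<in> EXT A" "p \<in> Bpts \<alpha> \<inter> U"
    using NQ_boundary_EXT[OF assms(1)] assms(2) unfolding z by blast+
  then show ?thesis
    unfolding z bset_of_def BM_def fst_conv snd_conv by blast
qed

lemma ident_cases:
  assumes "(z, w) \<in> ident A Q"
  shows "z \<in> NQ_interior A Q \<and> w \<in> NQ_interior A Q \<or>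
         z \<in> NQ_boundary A Q \<and> w \<in> NQ_boundary A Q \<and> bequiv (bset_of z) (bset_of w)"
  using assms unfolding ident_def NQ_interior_def NQ_boundary_def bset_of_def by auto

lemma ident_eq_cases:
  assumes "maximal_smooth_atlas A" "Q \<subseteq> EXT A" "(z, w) \<in> ident_eq A Q"
  shows "z \<in> NQ_interior A Q \<and> w \<in> NQ_interior A Q \<or>
         z \<in> NQ_boundary A Q \<and> w \<in> NQ_boundary A Q \<and> bequiv (bset_of z) (bset_of w)"
proof -
  let ?P = "\<lambda>z w. z \<in> NQ_interior A Q \<and> w \<in> NQ_interior A Q \<or>
         z \<in> NQ_boundary A Q \<and> w \<in> NQ_boundary A Q \<and> bequiv (bset_of z) (bset_of w)"
  have disj: "NQ_interior A Q \<inter> NQ_boundary A Q = {}"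
    using assms(1,2) by (rule NQ_interior_Int_NQ_boundary)
  have chain: "(z, w) \<in> (ident A Q \<union> (ident A Q)\<inverse>)\<^sup>*" and z: "z \<in> topspace (NQ_top A Q)"
    using assms(3) by (auto simp: ident_eq_def)
  from chain show ?thesis
  proof (induction rule: rtrancl_induct)
    case base
    show ?case using z bequiv_refl[of "bset_of z"] by (auto simp: topspace_NQ_top)
  next
    case (step y w)
    \<comment> \<open>transitivity of the invariant needs that no point is both interior and boundary\<close>
    have "?P y w"
      using step.hyps(2) ident_cases[of y w] ident_cases[of w y] bequiv_sym by blast
    then show ?case
      using step.IH disj bequiv_trans by blast
  qed
qed

lemma ident_interiorI:
  "(\<alpha>, U) \<in> SQ A Q \<Longrightarrow> (\<beta>, X) \<in> SQ A Q \<Longrightarrow> x \<in> cran \<alpha> \<Longrightarrow> y \<in> cran \<beta> \<Longrightarrow>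
   cinv \<alpha> x \<in> cdom \<beta> \<Longrightarrow> cmap \<beta> (cinv \<alpha> x) = y \<Longrightarrow> (((\<alpha>, U), x), ((\<beta>, X), y)) \<in> ident A Q"
  unfolding ident_def Nset_def by blast

lemma ident_boundaryI:
  "(\<alpha>, U) \<in> SQ A Q \<Longrightarrow> (\<beta>, X) \<in> SQ A Q \<Longrightarrow>
   x \<in> rel_bd U (cran \<alpha>) \<Longrightarrow> y \<in> rel_bd X (cran \<beta>) \<Longrightarrow>
   bequiv (\<alpha>, U, {x}) (\<beta>, X, {y}) \<Longrightarrow> (((\<alpha>, U), x), ((\<beta>, X), y)) \<in> ident A Q"
  unfolding ident_def Nset_def by blast

lemma ident_subset_ident_eq: "ident A Q \<subseteq> ident_eq A Q"
  by (auto simp: ident_eq_def ident_def NQ_top_def)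

lemma equiv_ident_eq: "equiv (topspace (NQ_top A Q)) (ident_eq A Q)"
proof -
  have "sym ((ident A Q \<union> (ident A Q)\<inverse>)\<^sup>*)"
    by (rule sym_rtrancl) (auto simp: sym_def)
  then show ?thesis
    unfolding ident_eq_def equiv_def
    by (auto simp: refl_on_def sym_def trans_def intro: rtrancl_trans)
qed

lemma openin_NQ_interior:
  assumes "maximal_smooth_atlas A" "Q \<subseteq> EXT A"
  shows "openin (NQ_top A Q) (NQ_interior A Q)"
  unfolding NQ_top_def NQ_interior_def openin_disjoint_union
proof
  fix s assume s: "s \<in> SQ A Q"
  have "fst s \<in> A" using s assms(2) by (auto simp: SQ_def EXT_def)
  with assms(1) have "open (cran (fst s))" by (rule open_cran)
  moreover have "cran (fst s) \<subseteq> Nset s" by (auto simp: Nset_def split: prod.split)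
  ultimately show "openin (top_of_set (Nset s)) (cran (fst s))"
    using openin_open_Int[of "cran (fst s)" "Nset s"] by (simp add: Int_absorb1)
qed

lemma closure_of_NQ_interior: "NQ_top A Q closure_of NQ_interior A Q = topspace (NQ_top A Q)"
proof -
  have closure_slice: "top_of_set (Nset s) closure_of cran (fst s) = Nset s" for s :: "('a, 'b) idx"
  proof -
    obtain \<alpha> U where s: "s = (\<alpha>, U)" by (metis prod.collapse)
    have N: "Nset s = cran \<alpha> \<union> rel_bd U (cran \<alpha>)" by (simp add: s Nset_def)
    then have "Nset s \<subseteq> closure (cran \<alpha>)"
      using closure_subset[of "cran \<alpha>"] rel_bd_subset_closure[of U "cran \<alpha>"] by blast
    moreover have "Nset s \<inter> cran \<alpha> = cran \<alpha>" using N by blast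
    ultimately show ?thesis
      by (simp add: s closure_of_subtopology Int_absorb2)
  qed
  show ?thesis
    unfolding NQ_top_def NQ_interior_def closure_of_Sigma_sum_topology topspace_sum_topology
    by (rule Sigma_cong) (simp_all add: closure_slice)
qed

lemma range_iotaQ:
  assumes "maximal_smooth_atlas A"
  shows "range (iotaQ A Q) = (\<lambda>z. ident_eq A Q `` {z}) ` NQ_interior A Q"
proof -
  let ?E = "ident_eq A Q"
  define ch where "ch x = (SOME \<beta>. \<beta> \<in> A \<and> x \<in> cdom \<beta>)" for x
  have ch: "ch x \<in> A \<and> x \<in> cdom (ch x)" for x
  proof -
    have "x \<in> (\<Union>\<alpha>\<in>A. cdom \<alpha>)" using assms by (simp add: maximal_smooth_atlas_def)
    then have "\<exists>\<beta>. \<beta> \<in> A \<and> x \<in> cdom \<beta>" by blast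
    then show ?thesis unfolding ch_def by (rule someI_ex)
  qed
  define z0 where "z0 x = ((ch x, cran (ch x)), cmap (ch x) x)" for x
  have z0: "z0 x \<in> NQ_interior A Q" for x
  proof -
    have "(ch x, cran (ch x)) \<in> SQ A Q" unfolding SQ_def using ch by blast
    moreover have "cmap (ch x) x \<in> cran (ch x)" unfolding cran_def using ch by blast
    ultimately show ?thesis by (simp add: z0_def NQ_interior_def)
  qed
  have iota: "iotaQ A Q x = ?E `` {z0 x}" for x
    by (simp add: iotaQ_def Let_def qmap_def z0_def ch_def)
  show ?thesis
  proof
    show "range (iotaQ A Q) \<subseteq> (\<lambda>z. ?E `` {z}) ` NQ_interior A Q"
    proof clarify
      fix x show "iotaQ A Q x \<in> (\<lambda>z. ?E `` {z}) ` NQ_interior A Q"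
        unfolding iota by (rule imageI[OF z0])
    qed
    show "(\<lambda>z. ?E `` {z}) ` NQ_interior A Q \<subseteq> range (iotaQ A Q)"
    proof
      fix C assume "C \<in> (\<lambda>z. ?E `` {z}) ` NQ_interior A Q"
      then obtain z where "z \<in> NQ_interior A Q" "C = ?E `` {z}" by blast
      moreover obtain \<alpha> U y where "z = ((\<alpha>, U), y)" by (metis prod.collapse)
      ultimately have z: "((\<alpha>, U), y) \<in> NQ_interior A Q" "C = ?E `` {((\<alpha>, U), y)}" by simp_all
      define x where "x = cinv \<alpha> y"
      have "(ch x, cran (ch x)) \<in> SQ A Q" "cmap (ch x) x \<in> cran (ch x)"
        using z0[of x] by (simp_all add: z0_def NQ_interior_def)
      moreover have "(\<alpha>, U) \<in> SQ A Q" "y \<in> cran \<alpha>"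
        using z(1) by (simp_all add: NQ_interior_def)
      moreover have "cinv \<alpha> y \<in> cdom (ch x)" using ch[of x] by (simp add: x_def)
      ultimately have "(((\<alpha>, U), y), z0 x) \<in> ident A Q"
        unfolding z0_def using ident_interiorI x_def by metis
      then have "(((\<alpha>, U), y), z0 x) \<in> ?E" using ident_subset_ident_eq by blast
      then have "C = ?E `` {z0 x}"
        unfolding z(2) by (rule equiv_class_eq[OF equiv_ident_eq])
      then show "C \<in> range (iotaQ A Q)" by (simp add: iota)
    qed
  qed
qed

lemma QM_top_eq_quotient_topology: "QM_top A Q = quotient_topology (NQ_top A Q) (ident_eq A Q)"
  unfolding QM_top_def quotient_topology_def ..

lemma frontier_of_range_iotaQ:
  assumes "maximal_smooth_atlas A" "Q \<subseteq> EXT A"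
  shows "QM_top A Q frontier_of range (iotaQ A Q) = (\<lambda>z. ident_eq A Q `` {z}) ` NQ_boundary A Q"
proof -
  have saturated: "ident_eq A Q `` NQ_interior A Q \<subseteq> NQ_interior A Q"
    using ident_eq_cases[OF assms] NQ_interior_Int_NQ_boundary[OF assms] by blast
  have "topspace (NQ_top A Q) - NQ_interior A Q = NQ_boundary A Q"
    using NQ_interior_Int_NQ_boundary[OF assms] by (auto simp: topspace_NQ_top)
  then show ?thesis
    unfolding range_iotaQ[OF assms(1)] QM_top_eq_quotient_topology
    using frontier_of_quotient_dense_open[OF equiv_ident_eq openin_NQ_interior[OF assms] saturated
        closure_of_NQ_interior]
    by simp
qed

lemma ident_eq_NQ_boundary_iff:
  assumes "maximal_smooth_atlas A" "Q \<subseteq> EXT A" "z \<in> NQ_boundary A Q" "w \<in> NQ_boundary A Q"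
  shows "(z, w) \<in> ident_eq A Q \<longleftrightarrow> bequiv (bset_of z) (bset_of w)"
proof
  show "(z, w) \<in> ident_eq A Q \<Longrightarrow> bequiv (bset_of z) (bset_of w)"
    using ident_eq_cases[OF assms(1,2)] NQ_interior_Int_NQ_boundary[OF assms(1,2)] assms(3)
    by blast
  assume "bequiv (bset_of z) (bset_of w)"
  moreover obtain \<alpha> U p \<beta> X q where "z = ((\<alpha>, U), p)" "w = ((\<beta>, X), q)"
    by (metis prod.collapse)
  ultimately have "(z, w) \<in> ident A Q"
    using assms(3,4) by (simp add: ident_boundaryI NQ_boundary_def bset_of_def)
  then show "(z, w) \<in> ident_eq A Q" using ident_subset_ident_eq by blast
qed

lemma BM_rel_bset_of_QA:
  assumes "b \<in> BM A"
  shows "\<exists>z\<in>NQ_boundary A (QA A). (bset_of z, b) \<in> BM_rel A"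
proof -
  obtain \<alpha> U p where b: "b = (\<alpha>, U, {p})" "(\<alpha>, U) \<in> EXT A" "p \<in> Bpts \<alpha> \<inter> U"
    using assms unfolding BM_def by blast
  have ext: "extendible A \<alpha>" using b(2) unfolding extendible_def by blast
  moreover have "\<alpha> \<in> A" using b(2) by (simp add: EXT_def)
  ultimately have "(\<alpha>, Umax A \<alpha>) \<in> QA A" unfolding QA_def by blast
  then have "(\<alpha>, Umax A \<alpha>) \<in> SQ A (QA A)" by (simp add: SQ_def)
  moreover have "p \<in> rel_bd (Umax A \<alpha>) (cran \<alpha>)"
    using Umax_greatest[OF ext] b(2,3) by (auto simp: EXT_def rel_bd_open Bpts_def)
  ultimately have z: "((\<alpha>, Umax A \<alpha>), p) \<in> NQ_boundary A (QA A)"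
    by (simp add: NQ_boundary_def)
  moreover have "bequiv (bset_of ((\<alpha>, Umax A \<alpha>), p)) b"
    by (simp add: b(1) bset_of_def bequiv_def covers_refl)
  ultimately show ?thesis
    using bset_of_in_BM[OF QA_subset_EXT z] assms by (auto simp: BM_rel_def)
qed

theorem mainTheorem7:
  fixes A :: "('a::{t2_space, second_countable_topology}, 'n::finite) chart set"
  assumes "maximal_smooth_atlas A"
  shows "\<exists>f. bij_betw f ((QM_top A (QA A)) frontier_of (iotaQ A (QA A) ` UNIV))
                        (BM A // BM_rel A)"
proof -
  have Q: "QA A \<subseteq> EXT A" by (rule QA_subset_EXT)
  have "bij_betw (\<lambda>C. BM_rel A `` bset_of ` (C \<inter> NQ_boundary A (QA A)))
          ((\<lambda>z. ident_eq A (QA A) `` {z}) ` NQ_boundary A (QA A)) (BM A // BM_rel A)"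
  proof (rule bij_betw_classes_quotient[OF equiv_ident_eq equiv_BM_rel])
    show "NQ_boundary A (QA A) \<subseteq> topspace (NQ_top A (QA A))"
      by (simp add: topspace_NQ_top)
    show "bset_of ` NQ_boundary A (QA A) \<subseteq> BM A"
      using bset_of_in_BM[OF Q] by blast
    show "(z, w) \<in> ident_eq A (QA A) \<longleftrightarrow> (bset_of z, bset_of w) \<in> BM_rel A"
      if "z \<in> NQ_boundary A (QA A)" "w \<in> NQ_boundary A (QA A)" for z w
      using that ident_eq_NQ_boundary_iff[OF assms Q] bset_of_in_BM[OF Q] by (simp add: BM_rel_def)
    show "\<exists>z\<in>NQ_boundary A (QA A). (bset_of z, b) \<in> BM_rel A" if "b \<in> BM A" for b
      using that by (rule BM_rel_bset_of_QA)
  qed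
  then show ?thesis
    unfolding frontier_of_range_iotaQ[OF assms Q] by blast
qed

end
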